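(* Let $(X,\sigma,T)$ be as in the context and let $\pi^L_{eq}:L\to L_{eq}$ be the maximal equicontinuous factor of the minimal system $(L,\sigma_L)$, with the group structure on $L_{eq}$ chosen so that $e_{eq}:=\pi^L_{eq}(e)$ is the neutral element. Then $\pi^L_{eq}$ is a semigroup morphism, $\pi^L_{eq}(f)=\pi^L_{eq}(ef)$ for all $f\in L$, and there is a closed normal subgroup $H$ of $\mathcal G$ with $\Gamma\subset H$ such that $\pi^L_{eq}(f)\mapsto efH$ is a well-defined group isomorphism $L_{eq}\cong \mathcal G/H$; i.e. the map $L\ni f\mapsto ef \bmod H\in\mathcal G/H$ is a maximal equicontinuous factor of $(L,\sigma_L)$.
   Context: $T$ is an abelian group acting continuously by $\sigma$ on a compact Hausdorff space $X$; the action is minimal and not distal. The Ellis semigroup $E(X)$ is the closure of $\{\sigma^t:t\in T\}$ in $X^X$ (pointwise convergence, composition), with $T$-action $\sigma_E^t(f)=\sigma^t\circ f$. Fix a minimal idempotent $e\in E(X)$, put $L=E(X)e$ (a minimal left ideal; $\sigma_L$ denotes the restriction of $\sigma_E$ to $L$, and $(L,\sigma_L)$ is minimal) and $\mathcal G=eL=eE(X)e$ (a group with identity $e$), with the subspace topology. The kernel (smallest two-sided ideal) of $E(X)$ is completely simple, hence isomorphic to a Rees matrix semigroup with structure group $\mathcal G$; the little structure group $\Gamma\subset \mathcal G$ is the subgroup generated by the entries of its sandwich matrix; equivalently $\Gamma$ is the intersection of $\mathcal G$ with the closure of the subsemigroup generated by the minimal idempotents of $E(X)$. *)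

theory Defs
  imports "HOL-Analysis.Analysis" "HOL-Algebra.Coset"
begin

definition is_action :: "('t::ab_group_add \<Rightarrow> 'x::topological_space \<Rightarrow> 'x) \<Rightarrow> bool" where
  "is_action \<sigma> \<longleftrightarrow> \<sigma> 0 = id \<and> (\<forall>s t. \<sigma> (s + t) = \<sigma> s \<circ> \<sigma> t) \<and> (\<forall>t. continuous_on UNIV (\<sigma> t))"

definition minimal_action :: "('t \<Rightarrow> 'x::topological_space \<Rightarrow> 'x) \<Rightarrow> bool" where
  "minimal_action \<sigma> \<longleftrightarrow>
     (\<forall>A. closed A \<and> A \<noteq> {} \<and> (\<forall>t. \<sigma> t ` A \<subseteq> A) \<longrightarrow> A = UNIV)"

definition distal_action :: "('t \<Rightarrow> 'x::topological_space \<Rightarrow> 'x) \<Rightarrow> bool" where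
  "distal_action \<sigma> \<longleftrightarrow>
     (\<forall>x y. x \<noteq> y \<longrightarrow> (\<forall>z. (z, z) \<notin> closure (range (\<lambda>t. (\<sigma> t x, \<sigma> t y)))))"

text \<open>Closure of the set of maps in the topology of pointwise convergence
  (the product topology on 'x \<Rightarrow> 'x); the product is composition.\<close>
definition ellis :: "('t \<Rightarrow> 'x \<Rightarrow> 'x::topological_space) \<Rightarrow> ('x \<Rightarrow> 'x) set" where
  "ellis \<sigma> = closure (range \<sigma>)"

definition left_ideal :: "('a \<Rightarrow> 'a) set \<Rightarrow> ('a \<Rightarrow> 'a) set \<Rightarrow> bool" where
  "left_ideal E I \<longleftrightarrow> I \<noteq> {} \<and> I \<subseteq> E \<and> (\<forall>f\<in>E. \<forall>g\<in>I. f \<circ> g \<in> I)"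

definition minimal_left_ideal :: "('a \<Rightarrow> 'a) set \<Rightarrow> ('a \<Rightarrow> 'a) set \<Rightarrow> bool" where
  "minimal_left_ideal E I \<longleftrightarrow> left_ideal E I \<and> (\<forall>J. left_ideal E J \<and> J \<subseteq> I \<longrightarrow> J = I)"

definition minimal_idempotent :: "('a \<Rightarrow> 'a) set \<Rightarrow> ('a \<Rightarrow> 'a) \<Rightarrow> bool" where
  "minimal_idempotent E e \<longleftrightarrow> e \<in> E \<and> e \<circ> e = e \<and> (\<exists>I. minimal_left_ideal E I \<and> e \<in> I)"

definition left_ideal_of :: "('a \<Rightarrow> 'a) set \<Rightarrow> ('a \<Rightarrow> 'a) \<Rightarrow> ('a \<Rightarrow> 'a) set" where
  "left_ideal_of E e = {f \<circ> e | f. f \<in> E}"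

definition ellis_group :: "('a \<Rightarrow> 'a) set \<Rightarrow> ('a \<Rightarrow> 'a) \<Rightarrow> ('a \<Rightarrow> 'a) set" where
  "ellis_group E e = {e \<circ> f | f. f \<in> left_ideal_of E e}"

definition ellis_group_mon :: "('a \<Rightarrow> 'a) set \<Rightarrow> ('a \<Rightarrow> 'a) \<Rightarrow> ('a \<Rightarrow> 'a) monoid" where
  "ellis_group_mon E e = \<lparr>carrier = ellis_group E e, mult = (\<circ>), one = e\<rparr>"

inductive_set gen_semigroup :: "('a \<Rightarrow> 'a) set \<Rightarrow> ('a \<Rightarrow> 'a) set" for S where
  base: "s \<in> S \<Longrightarrow> s \<in> gen_semigroup S"
| comp: "a \<in> gen_semigroup S \<Longrightarrow> b \<in> gen_semigroup S \<Longrightarrow> a \<circ> b \<in> gen_semigroup S"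

definition little_structure_group ::
  "('a \<Rightarrow> 'a::topological_space) set \<Rightarrow> ('a \<Rightarrow> 'a) \<Rightarrow> ('a \<Rightarrow> 'a) set" where
  "little_structure_group E e =
     ellis_group E e \<inter> closure (gen_semigroup {u. minimal_idempotent E u})"

text \<open>Equicontinuity of a family of self-maps of a compact Hausdorff space, w.r.t.
  its unique uniformity (entourages = neighbourhoods of the diagonal).\<close>
definition equicontinuous_family :: "'y topology \<Rightarrow> ('t \<Rightarrow> 'y \<Rightarrow> 'y) \<Rightarrow> bool" where
  "equicontinuous_family Y \<tau> \<longleftrightarrow>
     (\<forall>W. openin (prod_topology Y Y) W \<and> (\<forall>y\<in>topspace Y. (y, y) \<in> W) \<longrightarrow>
        (\<exists>V. openin (prod_topology Y Y) V \<and> (\<forall>y\<in>topspace Y. (y, y) \<in> V) \<and>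
             (\<forall>t. \<forall>(y, y')\<in>V. (\<tau> t y, \<tau> t y') \<in> W)))"

definition factor_map ::
  "'l topology \<Rightarrow> ('t \<Rightarrow> 'l \<Rightarrow> 'l) \<Rightarrow> 'y topology \<Rightarrow> ('t \<Rightarrow> 'y \<Rightarrow> 'y) \<Rightarrow> ('l \<Rightarrow> 'y) \<Rightarrow> bool" where
  "factor_map L \<sigma>L Y \<tau> p \<longleftrightarrow>
     compact_space Y \<and> Hausdorff_space Y \<and> (\<forall>t. continuous_map Y Y (\<tau> t)) \<and>
     continuous_map L Y p \<and> p ` topspace L = topspace Y \<and>
     (\<forall>t. \<forall>f\<in>topspace L. p (\<sigma>L t f) = \<tau> t (p f))"

definition equicontinuous_factor ::
  "'l topology \<Rightarrow> ('t \<Rightarrow> 'l \<Rightarrow> 'l) \<Rightarrow> 'y topology \<Rightarrow> ('t \<Rightarrow> 'y \<Rightarrow> 'y) \<Rightarrow> ('l \<Rightarrow> 'y) \<Rightarrow> bool" where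
  "equicontinuous_factor L \<sigma>L Y \<tau> p \<longleftrightarrow> factor_map L \<sigma>L Y \<tau> p \<and> equicontinuous_family Y \<tau>"

text \<open>Every factor of L is isomorphic to a quotient of L, which can be realised on a
  carrier of type 'l set; so quantifying over factors with carrier type 'l set
  loses no generality.\<close>
definition max_equicontinuous_factor ::
  "'l topology \<Rightarrow> ('t \<Rightarrow> 'l \<Rightarrow> 'l) \<Rightarrow> 'y topology \<Rightarrow> ('t \<Rightarrow> 'y \<Rightarrow> 'y) \<Rightarrow> ('l \<Rightarrow> 'y) \<Rightarrow> bool" where
  "max_equicontinuous_factor L \<sigma>L Y \<tau> p \<longleftrightarrow>
     equicontinuous_factor L \<sigma>L Y \<tau> p \<and>
     (\<forall>(Z :: 'l set topology) \<rho> q. equicontinuous_factor L \<sigma>L Z \<rho> q \<longrightarrow>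
        (\<exists>h. continuous_map Y Z h \<and> (\<forall>f\<in>topspace L. q f = h (p f))))"

end

theory Submission
  imports Defs
begin

text \<open>For f = \<sigma> t, equivariance of \<pi> and the fact that \<tau> t is the rotation by
  \<pi> (\<sigma> t \<circ> e) give \<pi> (f \<circ> h) = \<pi> (f \<circ> e) \<cdot> \<pi> h for every h in L = E e.
  Both sides are continuous in f, so the identity extends to the whole Ellis semigroup E.
  On L, where f \<circ> e = f, it says that \<pi> is a morphism, and f = e gives \<pi> (e \<circ> f) = \<pi> f.
  Hence \<pi> restricts to a surjective homomorphism from the group G = e L, and G / H \<cong> L_eq for
  its kernel H, which is closed because L_eq is Hausdorff.  An idempotent u satisfies
  \<pi> (u \<circ> e) \<cdot> \<pi> (u \<circ> e) = \<pi> (u \<circ> e), so \<pi> (u \<circ> e) is the unit; this closed condition is stable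
  under products, so it holds on the closed semigroup generated by the minimal idempotents,
  and therefore \<Gamma> \<subseteq> H.\<close>

lemma mem_ellis_group: "x \<in> ellis_group E e \<longleftrightarrow> (\<exists>g\<in>E. x = e \<circ> g \<circ> e)"
  by (auto simp: ellis_group_def left_ideal_of_def comp_assoc)

lemma left_ideal_of_comp_idempotent:
  assumes "e \<circ> e = e" and "f \<in> left_ideal_of E e"
  shows "f \<circ> e = f"
  using assms by (auto simp: left_ideal_of_def comp_assoc)

lemma ellis_group_comp_idempotent:
  assumes "e \<circ> e = e" and "x \<in> ellis_group E e"
  shows "e \<circ> x = x" and "x \<circ> e = x"
  using assms by (auto simp: mem_ellis_group comp_assoc[symmetric]) (simp_all add: comp_assoc)

context
  fixes E :: "('a \<Rightarrow> 'a) set"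
  assumes comp_closed: "\<And>f g. f \<in> E \<Longrightarrow> g \<in> E \<Longrightarrow> f \<circ> g \<in> E"
begin

lemma left_ideal_left_ideal_of:
  assumes "e \<in> E"
  shows "left_ideal E (left_ideal_of E e)"
  unfolding left_ideal_def
proof (intro conjI ballI subsetI)
  show "left_ideal_of E e \<noteq> {}"
    using assms by (auto simp: left_ideal_of_def)
  show "f \<in> E" if "f \<in> left_ideal_of E e" for f
    using that assms comp_closed by (auto simp: left_ideal_of_def)
  show "f \<circ> g \<in> left_ideal_of E e" if f: "f \<in> E" and g: "g \<in> left_ideal_of E e" for f g
  proof -
    obtain h where h: "h \<in> E" "g = h \<circ> e"
      using g by (auto simp: left_ideal_of_def)
    then have "f \<circ> g = (f \<circ> h) \<circ> e"
      by (simp add: comp_assoc)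
    then show ?thesis
      using f h comp_closed by (auto simp: left_ideal_of_def)
  qed
qed

lemma left_ideal_of_eq_minimal_left_ideal:
  assumes I: "minimal_left_ideal E I" and "e \<in> I"
  shows "left_ideal_of E e = I"
proof -
  have I_ideal: "left_ideal E I"
    using I by (simp add: minimal_left_ideal_def)
  then have "e \<in> E"
    using \<open>e \<in> I\<close> by (auto simp: left_ideal_def)
  have "left_ideal_of E e \<subseteq> I"
  proof
    fix f assume "f \<in> left_ideal_of E e"
    then obtain g where "g \<in> E" "f = g \<circ> e"
      by (auto simp: left_ideal_of_def)
    then show "f \<in> I"
      using I_ideal \<open>e \<in> I\<close> by (simp add: left_ideal_def)
  qed
  then show ?thesis
    using I left_ideal_left_ideal_of[OF \<open>e \<in> E\<close>] by (simp add: minimal_left_ideal_def)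
qed

lemma ellis_group_subset_left_ideal_of:
  assumes "e \<in> E"
  shows "ellis_group E e \<subseteq> left_ideal_of E e"
proof
  fix x assume "x \<in> ellis_group E e"
  then obtain g where "g \<in> E" "x = (e \<circ> g) \<circ> e"
    by (auto simp: mem_ellis_group)
  then show "x \<in> left_ideal_of E e"
    using assms comp_closed by (auto simp: left_ideal_of_def)
qed

lemma group_ellis_group_mon:
  assumes "minimal_idempotent E e"
  shows "group (ellis_group_mon E e)"
proof -
  obtain I where I: "minimal_left_ideal E I" "e \<in> I" and eE: "e \<in> E" and ee: "e \<circ> e = e"
    using assms by (auto simp: minimal_idempotent_def)
  have ee_left: "e \<circ> (e \<circ> h) = e \<circ> h" for h
    using ee by (simp add: comp_assoc[symmetric])
  let ?L = "left_ideal_of E e" and ?G = "ellis_group E e"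
  have L_min: "minimal_left_ideal E ?L"
    using I left_ideal_of_eq_minimal_left_ideal by simp
  have e_L: "e \<in> ?L"
    using eE ee by (auto simp: left_ideal_of_def intro!: exI[of _ e])
  have comp_mem: "x \<circ> y \<in> ?G" if xy: "x \<in> ?G" "y \<in> ?G" for x y
  proof -
    obtain f g where "f \<in> E" "g \<in> E" "x = e \<circ> f \<circ> e" "y = e \<circ> g \<circ> e"
      using xy unfolding mem_ellis_group by blast
    then have "x \<circ> y = e \<circ> (f \<circ> e \<circ> g) \<circ> e" and "f \<circ> e \<circ> g \<in> E"
      using eE comp_closed by (simp_all add: comp_assoc ee_left)
    then show ?thesis
      by (auto simp: mem_ellis_group)
  qed
  have inverse: "\<exists>y\<in>?G. y \<circ> x = e" if x: "x \<in> ?G" for x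
  proof -
    obtain g where g: "g \<in> E" "x = e \<circ> g \<circ> e"
      using x by (auto simp: mem_ellis_group)
    then have xE: "x \<in> E" and xe: "x \<circ> e = x" and ex: "e \<circ> x = x"
      using eE ee comp_closed by (simp_all add: comp_assoc ee_left)
    \<comment> \<open>E x is a left ideal inside the minimal left ideal L = E e, so it contains e.\<close>
    have "left_ideal_of E x \<subseteq> ?L"
    proof
      fix f assume "f \<in> left_ideal_of E x"
      then obtain k where "k \<in> E" "f = (k \<circ> x) \<circ> e"
        using xe by (auto simp: left_ideal_of_def comp_assoc)
      then show "f \<in> ?L"
        using xE comp_closed by (auto simp: left_ideal_of_def)
    qed
    then have "left_ideal_of E x = ?L"
      using L_min left_ideal_left_ideal_of[OF xE] by (simp add: minimal_left_ideal_def)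
    then obtain f where f: "f \<in> E" "e = f \<circ> x"
      using e_L by (auto simp: left_ideal_of_def)
    have "e \<circ> f \<circ> e \<in> ?G"
      using f by (auto simp: mem_ellis_group)
    moreover have "(e \<circ> f \<circ> e) \<circ> x = e \<circ> (f \<circ> x)"
      using ex by (simp add: comp_assoc)
    ultimately show ?thesis
      using f(2) ee by auto
  qed
  have unit: "e \<circ> x = x" if "x \<in> ?G" for x
    using that ee ellis_group_comp_idempotent by blast
  have e_G: "e \<in> ?G"
    using eE ee by (auto simp: mem_ellis_group intro!: bexI[of _ e])
  show ?thesis
    by (rule groupI) (auto simp: ellis_group_mon_def comp_mem inverse unit e_G comp_assoc)
qed

end

lemma (in group_hom) FactGroup_iso_inverse:
  assumes surj: "h ` carrier G = carrier H"
  obtains \<phi> where "\<phi> \<in> iso H (G Mod kernel G H h)"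
    and "\<And>x. x \<in> carrier G \<Longrightarrow> \<phi> (h x) = x <# kernel G H h"
proof -
  let ?K = "kernel G H h" and ?\<Psi> = "\<lambda>X. the_elem (h ` X)"
  have \<Psi>: "?\<Psi> \<in> iso (G Mod ?K) H"
    using FactGroup_iso_set[OF surj] .
  have coset: "x <# ?K \<in> carrier (G Mod ?K)" and \<Psi>_coset: "?\<Psi> (x <# ?K) = h x"
    if x: "x \<in> carrier G" for x
  proof -
    have rcos: "x <# ?K = ?K #> x"
      using normal.coset_eq[OF normal_kernel] x by blast
    then show "x <# ?K \<in> carrier (G Mod ?K)"
      using x by (simp add: carrier_FactGroup)
    have "h ` (?K #> x) \<subseteq> {h x}"
      using x by (auto simp: kernel_def r_coset_def)
    moreover have "x \<in> ?K #> x"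
      using x subgroup_kernel by (rule G.rcos_self)
    ultimately have "h ` (?K #> x) = {h x}"
      by blast
    then show "?\<Psi> (x <# ?K) = h x"
      by (simp add: rcos)
  qed
  show thesis
  proof (rule that)
    show "inv_into (carrier (G Mod ?K)) ?\<Psi> \<in> iso H (G Mod ?K)"
      using group.iso_set_sym[OF normal.factorgroup_is_group[OF normal_kernel] \<Psi>] .
    show "inv_into (carrier (G Mod ?K)) ?\<Psi> (h x) = x <# ?K" if "x \<in> carrier G" for x
      using \<Psi> coset[OF that] \<Psi>_coset[OF that] by (intro inv_into_f_eq) (auto simp: iso_def bij_betw_def)
  qed
qed

lemma continuous_on_comp_right:
  "continuous_on S (\<lambda>f::'a \<Rightarrow> 'b::topological_space. f \<circ> h)"
proof (rule continuous_on_coordinatewise_then_product)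
  fix i
  show "continuous_on S (\<lambda>f::'a \<Rightarrow> 'b. (f \<circ> h) i)"
    unfolding o_def by (rule continuous_on_subset[of UNIV]) simp_all
qed

lemma continuous_on_comp_left:
  fixes g :: "'b::topological_space \<Rightarrow> 'c::topological_space"
  assumes "continuous_on UNIV g"
  shows "continuous_on S (\<lambda>f::'a \<Rightarrow> 'b. g \<circ> f)"
proof (rule continuous_on_coordinatewise_then_product)
  fix i
  have "continuous_on UNIV (\<lambda>f::'a \<Rightarrow> 'b. g (f i))"
    by (rule continuous_on_compose2[OF assms continuous_on_product_coordinates]) simp
  then show "continuous_on S (\<lambda>f::'a \<Rightarrow> 'b. (g \<circ> f) i)"
    unfolding o_def by (rule continuous_on_subset) simp
qed

lemma action_in_ellis: "\<sigma> t \<in> ellis \<sigma>"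
  by (simp add: ellis_def closure_subset[THEN subsetD])

lemma ellis_stable_under_continuous_map:
  assumes "continuous_on (ellis \<sigma>) \<phi>" and "\<And>t. \<phi> (\<sigma> t) \<in> ellis \<sigma>" and "f \<in> ellis \<sigma>"
  shows "\<phi> f \<in> ellis \<sigma>"
proof -
  have "\<phi> ` closure (range \<sigma>) \<subseteq> closure (ellis \<sigma>)"
    using assms(1,2) by (intro image_closure_subset) (auto simp: ellis_def)
  then show ?thesis
    using assms(3) by (auto simp: ellis_def)
qed

lemma ellis_comp:
  fixes \<sigma> :: "'t::ab_group_add \<Rightarrow> 'x::topological_space \<Rightarrow> 'x"
  assumes action: "is_action \<sigma>" and f: "f \<in> ellis \<sigma>" and g: "g \<in> ellis \<sigma>"
  shows "f \<circ> g \<in> ellis \<sigma>"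
proof -
  have left: "\<sigma> t \<circ> k \<in> ellis \<sigma>" if "k \<in> ellis \<sigma>" for t k
  proof (rule ellis_stable_under_continuous_map[OF _ _ that])
    show "continuous_on (ellis \<sigma>) ((\<circ>) (\<sigma> t))"
      using action by (intro continuous_on_comp_left) (simp add: is_action_def)
    show "\<sigma> t \<circ> \<sigma> s \<in> ellis \<sigma>" for s
      using action action_in_ellis[of \<sigma> "t + s"] by (simp add: is_action_def)
  qed
  show ?thesis
    by (rule ellis_stable_under_continuous_map[of \<sigma> "\<lambda>f. f \<circ> g", OF continuous_on_comp_right
          left[OF g] f])
qed

locale ellis_rotation_factor =
  fixes \<sigma> :: "'t::ab_group_add \<Rightarrow> 'x::topological_space \<Rightarrow> 'x"
    and e :: "'x \<Rightarrow> 'x"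
    and Y :: "'y topology"
    and \<tau> :: "'t \<Rightarrow> 'y \<Rightarrow> 'y"
    and \<pi> :: "('x \<Rightarrow> 'x) \<Rightarrow> 'y"
    and m :: "'y \<Rightarrow> 'y \<Rightarrow> 'y"
  assumes action: "is_action \<sigma>"
    and e_in_ellis: "e \<in> ellis \<sigma>"
    and e_idempotent: "e \<circ> e = e"
    and factor: "factor_map (top_of_set (left_ideal_of (ellis \<sigma>) e)) (\<lambda>t f. \<sigma> t \<circ> f) Y \<tau> \<pi>"
    and group_factor_group: "group \<lparr>carrier = topspace Y, mult = m, one = \<pi> e\<rparr>"
    and mult_continuous: "continuous_map (prod_topology Y Y) Y (\<lambda>(a, b). m a b)"
    and rotation: "\<And>t y. y \<in> topspace Y \<Longrightarrow> \<tau> t y = m (\<tau> t (\<pi> e)) y"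
begin

abbreviation L :: "('x \<Rightarrow> 'x) set"
  where "L \<equiv> left_ideal_of (ellis \<sigma>) e"

abbreviation factor_group :: "'y monoid"
  where "factor_group \<equiv> \<lparr>carrier = topspace Y, mult = m, one = \<pi> e\<rparr>"

lemma Hausdorff_Y: "Hausdorff_space Y"
  using factor by (simp add: factor_map_def)

lemma continuous_map_pi: "continuous_map (top_of_set L) Y \<pi>"
  using factor by (simp add: factor_map_def)

lemma image_pi: "\<pi> ` L = topspace Y"
  using factor by (simp add: factor_map_def)

lemma pi_equivariant: "h \<in> L \<Longrightarrow> \<pi> (\<sigma> t \<circ> h) = \<tau> t (\<pi> h)"
  using factor by (simp add: factor_map_def)

lemma pi_in_topspace: "h \<in> L \<Longrightarrow> \<pi> h \<in> topspace Y"
  using image_pi by blast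

lemma left_ideal_L: "left_ideal (ellis \<sigma>) L"
  using left_ideal_left_ideal_of[OF ellis_comp[OF action] e_in_ellis] .

lemma L_subset_ellis: "L \<subseteq> ellis \<sigma>"
  using left_ideal_L by (simp add: left_ideal_def)

lemma left_ideal_closed: "f \<in> ellis \<sigma> \<Longrightarrow> h \<in> L \<Longrightarrow> f \<circ> h \<in> L"
  using left_ideal_L by (simp add: left_ideal_def)

lemma e_in_L: "e \<in> L"
  using e_in_ellis e_idempotent by (auto simp: left_ideal_of_def intro!: exI[of _ e])

lemma continuous_map_pi_comp_right:
  assumes "h \<in> L"
  shows "continuous_map (top_of_set (ellis \<sigma>)) Y (\<lambda>f. \<pi> (f \<circ> h))"
proof -
  have "continuous_map (top_of_set (ellis \<sigma>)) (top_of_set L) (\<lambda>f. f \<circ> h)"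
    using assms left_ideal_closed continuous_on_comp_right
    by (intro continuous_map_into_subtopology) (auto simp: continuous_map_iff_continuous)
  then show ?thesis
    using continuous_map_pi by (rule continuous_map_compose[unfolded o_def])
qed

lemma pi_comp:
  assumes f: "f \<in> ellis \<sigma>" and h: "h \<in> L"
  shows "\<pi> (f \<circ> h) = m (\<pi> (f \<circ> e)) (\<pi> h)"
proof -
  let ?A = "{f \<in> topspace (top_of_set (ellis \<sigma>)). \<pi> (f \<circ> h) = m (\<pi> (f \<circ> e)) (\<pi> h)}"
  have "continuous_map (top_of_set (ellis \<sigma>)) (prod_topology Y Y) (\<lambda>f. (\<pi> (f \<circ> e), \<pi> h))"
    using continuous_map_pi_comp_right[OF e_in_L] pi_in_topspace[OF h]
    by (simp add: continuous_map_paired)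
  from continuous_map_compose[OF this mult_continuous]
  have "continuous_map (top_of_set (ellis \<sigma>)) Y (\<lambda>f. m (\<pi> (f \<circ> e)) (\<pi> h))"
    by (simp add: o_def)
  then have "closedin (top_of_set (ellis \<sigma>)) ?A"
    by (rule closedin_continuous_maps_eq[OF Hausdorff_Y continuous_map_pi_comp_right[OF h]])
  then have "closed ?A"
    by (rule closedin_closed_trans) (simp add: ellis_def)
  moreover have "range \<sigma> \<subseteq> ?A"
  proof (clarsimp simp: action_in_ellis)
    fix t
    have "\<pi> (\<sigma> t \<circ> h) = m (\<tau> t (\<pi> e)) (\<pi> h)"
      using h pi_equivariant rotation pi_in_topspace by simp
    then show "\<pi> (\<sigma> t \<circ> h) = m (\<pi> (\<sigma> t \<circ> e)) (\<pi> h)"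
      using pi_equivariant[OF e_in_L] by simp
  qed
  ultimately have "ellis \<sigma> \<subseteq> ?A"
    unfolding ellis_def by (rule closure_minimal[rotated])
  then show ?thesis
    using f by auto
qed

lemma pi_comp_left_ideal: "f \<in> L \<Longrightarrow> g \<in> L \<Longrightarrow> \<pi> (f \<circ> g) = m (\<pi> f) (\<pi> g)"
  using pi_comp L_subset_ellis left_ideal_of_comp_idempotent[OF e_idempotent] by auto

lemma mult_one_left: "y \<in> topspace Y \<Longrightarrow> m (\<pi> e) y = y"
  using monoid.l_one[OF group.is_monoid[OF group_factor_group]] by fastforce

lemma pi_idempotent_comp: "f \<in> L \<Longrightarrow> \<pi> (e \<circ> f) = \<pi> f"
  using pi_comp[OF e_in_ellis] e_idempotent mult_one_left pi_in_topspace by simp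

lemma pi_comp_idempotent:
  assumes "u \<in> ellis \<sigma>" and "u \<circ> u = u"
  shows "\<pi> (u \<circ> e) = \<pi> e"
proof -
  have ue: "u \<circ> e \<in> L"
    using assms(1) e_in_L left_ideal_closed by blast
  have "m (\<pi> (u \<circ> e)) (\<pi> (u \<circ> e)) = \<pi> (u \<circ> (u \<circ> e))"
    using pi_comp[OF assms(1) ue] by simp
  also have "\<dots> = \<pi> (u \<circ> e)"
    using assms(2) by (simp add: comp_assoc[symmetric])
  finally show ?thesis
    using group.r_cancel_one[OF group_factor_group, of "\<pi> (u \<circ> e)" "\<pi> (u \<circ> e)"] pi_in_topspace[OF ue]
    by simp
qed

lemma closure_gen_semigroup_idempotents:
  assumes "S \<subseteq> {u \<in> ellis \<sigma>. u \<circ> u = u}"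
  shows "closure (gen_semigroup S) \<subseteq> {u \<in> ellis \<sigma>. \<pi> (u \<circ> e) = \<pi> e}"
proof (rule closure_minimal)
  show "gen_semigroup S \<subseteq> {u \<in> ellis \<sigma>. \<pi> (u \<circ> e) = \<pi> e}"
  proof
    fix u assume "u \<in> gen_semigroup S"
    then show "u \<in> {u \<in> ellis \<sigma>. \<pi> (u \<circ> e) = \<pi> e}"
    proof induction
      case (base s)
      then show ?case
        using assms pi_comp_idempotent by blast
    next
      case (comp a b)
      then have a: "a \<in> ellis \<sigma>" "\<pi> (a \<circ> e) = \<pi> e" and b: "b \<in> ellis \<sigma>" "\<pi> (b \<circ> e) = \<pi> e"
        by (auto simp: comp_def)
      have "\<pi> (a \<circ> b \<circ> e) = m (\<pi> (a \<circ> e)) (\<pi> (b \<circ> e))"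
        using pi_comp[OF a(1), of "b \<circ> e"] b(1) e_in_L left_ideal_closed by (simp add: comp_assoc)
      also have "\<dots> = \<pi> e"
        using a(2) b(2) mult_one_left pi_in_topspace[OF e_in_L] by simp
      finally show ?case
        using ellis_comp[OF action a(1) b(1)] by (simp add: comp_def)
    qed
  qed
  have "closedin (top_of_set (ellis \<sigma>)) {u \<in> topspace (top_of_set (ellis \<sigma>)). \<pi> (u \<circ> e) = \<pi> e}"
    using Hausdorff_Y continuous_map_pi_comp_right[OF e_in_L] pi_in_topspace[OF e_in_L]
    by (intro closedin_continuous_maps_eq) auto
  then show "closed {u \<in> ellis \<sigma>. \<pi> (u \<circ> e) = \<pi> e}"
    using closedin_closed_trans[of "ellis \<sigma>"] by (simp add: ellis_def)
qed

abbreviation G :: "('x \<Rightarrow> 'x) set"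
  where "G \<equiv> ellis_group (ellis \<sigma>) e"

abbreviation G_mon :: "('x \<Rightarrow> 'x) monoid"
  where "G_mon \<equiv> ellis_group_mon (ellis \<sigma>) e"

lemma G_subset_L: "G \<subseteq> L"
  using ellis_group_subset_left_ideal_of[OF ellis_comp[OF action] e_in_ellis] .

lemma idempotent_comp_in_G: "f \<in> L \<Longrightarrow> e \<circ> f \<in> G"
  by (auto simp: ellis_group_def)

lemma pi_hom: "\<pi> \<in> hom G_mon factor_group"
  using G_subset_L pi_in_topspace pi_comp_left_ideal
  by (auto simp: hom_def ellis_group_mon_def subset_iff)

lemma image_pi_ellis_group: "\<pi> ` G = topspace Y"
proof
  show "\<pi> ` G \<subseteq> topspace Y"
    using G_subset_L pi_in_topspace by blast
  show "topspace Y \<subseteq> \<pi> ` G"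
  proof
    fix y assume "y \<in> topspace Y"
    then obtain f where "f \<in> L" "y = \<pi> f"
      using image_pi by auto
    then show "y \<in> \<pi> ` G"
      using idempotent_comp_in_G pi_idempotent_comp by (metis image_eqI)
  qed
qed

lemma kernel_pi: "kernel G_mon factor_group \<pi> = {g \<in> G. \<pi> g = \<pi> e}"
  by (simp add: kernel_def ellis_group_mon_def)

lemma closedin_kernel_pi: "closedin (top_of_set G) (kernel G_mon factor_group \<pi>)"
proof -
  have "continuous_map (top_of_set G) Y \<pi>"
    using continuous_map_pi G_subset_L by (rule continuous_map_from_subtopology_mono)
  moreover have "closedin Y {\<pi> e}"
    using Hausdorff_Y pi_in_topspace[OF e_in_L]
    by (metis Hausdorff_imp_t1_space t1_space_closedin_singleton)
  ultimately show ?thesis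
    unfolding kernel_pi using closedin_continuous_map_preimage by fastforce
qed

lemma little_structure_group_subset_kernel_pi:
  "little_structure_group (ellis \<sigma>) e \<subseteq> kernel G_mon factor_group \<pi>"
proof -
  have "closure (gen_semigroup {u. minimal_idempotent (ellis \<sigma>) u})
          \<subseteq> {u \<in> ellis \<sigma>. \<pi> (u \<circ> e) = \<pi> e}"
    by (rule closure_gen_semigroup_idempotents) (auto simp: minimal_idempotent_def)
  moreover have "g \<circ> e = g" if "g \<in> G" for g
    using e_idempotent that by (rule ellis_group_comp_idempotent)
  ultimately show ?thesis
    unfolding kernel_pi little_structure_group_def by auto
qed

end


theorem mainTheorem2:
  fixes \<sigma> :: "'t::ab_group_add \<Rightarrow> 'x::t2_space \<Rightarrow> 'x"
    and e :: "'x \<Rightarrow> 'x"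
    and Leq :: "'y topology"
    and \<tau> :: "'t \<Rightarrow> 'y \<Rightarrow> 'y"
    and \<pi> :: "('x \<Rightarrow> 'x) \<Rightarrow> 'y"
    and m :: "'y \<Rightarrow> 'y \<Rightarrow> 'y"
  assumes X_compact: "compact (UNIV :: 'x set)"
    and action: "is_action \<sigma>"
    and minimal: "minimal_action \<sigma>"
    and not_distal: "\<not> distal_action \<sigma>"
    and e_min: "minimal_idempotent (ellis \<sigma>) e"
    and max_eq: "max_equicontinuous_factor (top_of_set (left_ideal_of (ellis \<sigma>) e))
                   (\<lambda>t f. \<sigma> t \<circ> f) Leq \<tau> \<pi>"
    and grp: "comm_group \<lparr>carrier = topspace Leq, mult = m, one = \<pi> e\<rparr>"
    and m_cont: "continuous_map (prod_topology Leq Leq) Leq (\<lambda>(a, b). m a b)"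
    and rotation: "\<forall>t. \<forall>y\<in>topspace Leq. \<tau> t y = m (\<tau> t (\<pi> e)) y"
  shows "(\<forall>f\<in>left_ideal_of (ellis \<sigma>) e. \<forall>g\<in>left_ideal_of (ellis \<sigma>) e.
            \<pi> (f \<circ> g) = m (\<pi> f) (\<pi> g))
       \<and> (\<forall>f\<in>left_ideal_of (ellis \<sigma>) e. \<pi> f = \<pi> (e \<circ> f))
       \<and> (\<exists>H. H \<lhd> ellis_group_mon (ellis \<sigma>) e
              \<and> closedin (top_of_set (ellis_group (ellis \<sigma>) e)) H
              \<and> little_structure_group (ellis \<sigma>) e \<subseteq> H
              \<and> (\<exists>\<phi>. \<phi> \<in> iso \<lparr>carrier = topspace Leq, mult = m, one = \<pi> e\<rparr>
                              (ellis_group_mon (ellis \<sigma>) e Mod H)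
                     \<and> (\<forall>f\<in>left_ideal_of (ellis \<sigma>) e.
                           \<phi> (\<pi> f) = (e \<circ> f) <#\<^bsub>ellis_group_mon (ellis \<sigma>) e\<^esub> H)))"
proof -
  interpret ellis_rotation_factor \<sigma> e Leq \<tau> \<pi> m
  proof (rule ellis_rotation_factor.intro)
    show "e \<in> ellis \<sigma>" and "e \<circ> e = e"
      using e_min by (simp_all add: minimal_idempotent_def)
    show "factor_map (top_of_set (left_ideal_of (ellis \<sigma>) e)) (\<lambda>t f. \<sigma> t \<circ> f) Leq \<tau> \<pi>"
      using max_eq by (simp add: max_equicontinuous_factor_def equicontinuous_factor_def)
    show "group \<lparr>carrier = topspace Leq, mult = m, one = \<pi> e\<rparr>"
      using grp by (rule comm_group.axioms(2))
  qed (use action m_cont rotation in auto)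
  have "group G_mon"
    using group_ellis_group_mon ellis_comp[OF action] e_min by blast
  then interpret group_hom G_mon factor_group \<pi>
    using pi_hom group_factor_group by (simp add: group_hom_def group_hom_axioms_def)
  let ?H = "kernel G_mon factor_group \<pi>"
  obtain \<phi> where \<phi>: "\<phi> \<in> iso factor_group (G_mon Mod ?H)"
    and \<phi>_pi: "\<And>g. g \<in> G \<Longrightarrow> \<phi> (\<pi> g) = g <#\<^bsub>G_mon\<^esub> ?H"
    using FactGroup_iso_inverse image_pi_ellis_group by (auto simp: ellis_group_mon_def)
  have "\<phi> (\<pi> f) = (e \<circ> f) <#\<^bsub>G_mon\<^esub> ?H" if "f \<in> L" for f
    using \<phi>_pi[OF idempotent_comp_in_G[OF that]] pi_idempotent_comp[OF that] by simp
  then show ?thesis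
    using pi_comp_left_ideal pi_idempotent_comp normal_kernel closedin_kernel_pi
      little_structure_group_subset_kernel_pi \<phi>
    by (intro conjI ballI exI[of _ ?H] exI[of _ \<phi>]) auto
qed

end
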